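(* Let $(M,\mathscr{F}_M,\mu)$ be a $\sigma$-finite measure space, $\mathscr{F}_{fin}=\{A\in\mathscr{F}_M:0<\mu(A)<\infty\}$, and $K^{(\mu)}(A,B)=\mu(A\cap B)$ for $A,B\in\mathscr{F}_{fin}$. A function $\Phi$ on $\mathscr{F}_{fin}$ belongs to the reproducing kernel Hilbert space $\mathscr{H}(K^{(\mu)})$ if and only if there is $\varphi\in L^2(M,\mathscr{F}_M,\mu)$ with $\Phi(A)=\int_A\varphi\,d\mu$ for all $A\in\mathscr{F}_{fin}$; in that case $\|\Phi\|_{\mathscr{H}(K^{(\mu)})}=\|\varphi\|_{L^2(\mu)}$.
   Context: $K^{(\mu)}$ is a positive definite kernel on $\mathscr{F}_{fin}$. For a positive definite kernel $K$ on a set $Y$, $\mathscr{H}(K)$ is the completion of the span of $\{K(\cdot,y)\}_{y\in Y}$ under $\langle K(\cdot,x),K(\cdot,y)\rangle=K(x,y)$, realized as functions on $Y$ with the reproducing property $\langle K(\cdot,y),h\rangle=h(y)$. *)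

theory Defs
  imports "HOL-Analysis.Analysis" "HOL-Probability.Probability"
begin

text \<open>Reproducing kernel Hilbert space H(K) of a positive definite kernel K on a set Y,
  realized as functions on Y (Aronszajn's construction): elements of the span of
  the K(.,y), y in Y, are encoded by finitely supported coefficient functions c
  (support inside Y); H(K) consists of the pointwise limits on Y of sequences of
  span elements that are Cauchy for the norm induced by K(x,y) = <K(.,x),K(.,y)>.\<close>

definition ksupp :: "('y \<Rightarrow> real) \<Rightarrow> 'y set" where
  "ksupp c = {y. c y \<noteq> 0}"

definition kcoeffs :: "'y set \<Rightarrow> ('y \<Rightarrow> real) set" where
  "kcoeffs Y = {c. finite (ksupp c) \<and> ksupp c \<subseteq> Y}"

definition kspan_fun :: "('y \<Rightarrow> 'y \<Rightarrow> real) \<Rightarrow> ('y \<Rightarrow> real) \<Rightarrow> 'y \<Rightarrow> real" where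
  "kspan_fun K c = (\<lambda>x. \<Sum>y\<in>ksupp c. c y * K x y)"

definition kspan_norm2 :: "('y \<Rightarrow> 'y \<Rightarrow> real) \<Rightarrow> ('y \<Rightarrow> real) \<Rightarrow> real" where
  "kspan_norm2 K c = (\<Sum>y\<in>ksupp c. \<Sum>z\<in>ksupp c. c y * c z * K y z)"

definition rkhs_approx ::
  "('y \<Rightarrow> 'y \<Rightarrow> real) \<Rightarrow> 'y set \<Rightarrow> (nat \<Rightarrow> 'y \<Rightarrow> real) \<Rightarrow> ('y \<Rightarrow> real) \<Rightarrow> bool" where
  "rkhs_approx K Y cs f \<longleftrightarrow>
     (\<forall>n. cs n \<in> kcoeffs Y) \<and>
     (\<forall>e>0. \<exists>N. \<forall>m\<ge>N. \<forall>n\<ge>N. sqrt (kspan_norm2 K (\<lambda>y. cs m y - cs n y)) < e) \<and>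
     (\<forall>x\<in>Y. (\<lambda>n. kspan_fun K (cs n) x) \<longlonglongrightarrow> f x)"

definition in_RKHS :: "('y \<Rightarrow> 'y \<Rightarrow> real) \<Rightarrow> 'y set \<Rightarrow> ('y \<Rightarrow> real) \<Rightarrow> bool" where
  "in_RKHS K Y f \<longleftrightarrow> (\<exists>cs. rkhs_approx K Y cs f)"

definition rkhs_norm :: "('y \<Rightarrow> 'y \<Rightarrow> real) \<Rightarrow> 'y set \<Rightarrow> ('y \<Rightarrow> real) \<Rightarrow> real" where
  "rkhs_norm K Y f = (THE r. \<forall>cs. rkhs_approx K Y cs f \<longrightarrow>
                               (\<lambda>n. sqrt (kspan_norm2 K (cs n))) \<longlonglongrightarrow> r)"

definition Ffin :: "'a measure \<Rightarrow> 'a set set" where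
  "Ffin M = {A \<in> sets M. 0 < emeasure M A \<and> emeasure M A < \<infinity>}"

definition Kmu :: "'a measure \<Rightarrow> 'a set \<Rightarrow> 'a set \<Rightarrow> real" where
  "Kmu M A B = measure M (A \<inter> B)"

definition L2 :: "'a measure \<Rightarrow> ('a \<Rightarrow> real) set" where
  "L2 M = {f. f \<in> borel_measurable M \<and> integrable M (\<lambda>x. (f x)\<^sup>2)}"

definition L2_norm_of :: "'a measure \<Rightarrow> ('a \<Rightarrow> real) \<Rightarrow> real" where
  "L2_norm_of M f = sqrt (\<integral>x. (f x)\<^sup>2 \<partial>M)"

end

theory Submission
  imports Defs
begin

(* Since \<mu>(A \<inter> B) is the L2 inner product of the indicators of A and B, the map
   c \<mapsto> \<Sum>A. c A * 1_A sends the span of the kernel sections isometrically into L2(\<mu>) and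
   turns evaluation at B into integration over B. A K-Cauchy sequence of span elements is
   therefore an L2-Cauchy sequence of step functions; its L2 limit \<phi> represents the pointwise
   limit \<Phi> by \<Phi> B = \<integral>_B \<phi>. Conversely, step functions over sets of finite positive measure are
   dense in L2, so every such \<Phi> is reached. An L2 function whose integrals over all sets of
   finite positive measure vanish is zero a.e., so \<phi> is determined by \<Phi> and the RKHS norm is
   the L2 norm of \<phi>. *)

lemma L2_measurable: "f \<in> L2 M \<Longrightarrow> f \<in> borel_measurable M"
  by (simp add: L2_def)

lemma L2_integrable_square: "f \<in> L2 M \<Longrightarrow> integrable M (\<lambda>x. (f x)\<^sup>2)"
  by (simp add: L2_def)

lemma L2_integrable_mult:
  assumes "f \<in> L2 M" "g \<in> L2 M"
  shows "integrable M (\<lambda>x. f x * g x)"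
proof (rule Bochner_Integration.integrable_bound)
  show "integrable M (\<lambda>x. (f x)\<^sup>2 + (g x)\<^sup>2)"
    using assms by (simp add: L2_integrable_square)
  show "(\<lambda>x. f x * g x) \<in> borel_measurable M"
    using assms by (auto simp: L2_def)
  have "\<bar>f x * g x\<bar> \<le> (f x)\<^sup>2 + (g x)\<^sup>2" for x
  proof -
    have "2 * (\<bar>f x\<bar> * \<bar>g x\<bar>) \<le> (f x)\<^sup>2 + (g x)\<^sup>2"
      using sum_squares_bound[of "\<bar>f x\<bar>" "\<bar>g x\<bar>"] by (simp add: mult.assoc)
    moreover have "0 \<le> \<bar>f x\<bar> * \<bar>g x\<bar>" by simp
    ultimately show ?thesis unfolding abs_mult by linarith
  qed
  then show "AE x in M. norm (f x * g x) \<le> norm ((f x)\<^sup>2 + (g x)\<^sup>2)"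
    by simp
qed

lemma L2_add:
  assumes "f \<in> L2 M" "g \<in> L2 M"
  shows "(\<lambda>x. f x + g x) \<in> L2 M"
proof -
  have "(f x + g x)\<^sup>2 = (f x)\<^sup>2 + (g x)\<^sup>2 + 2 * (f x * g x)" for x
    by (simp add: power2_eq_square algebra_simps)
  then show ?thesis
    using assms L2_integrable_mult[OF assms] by (auto simp: L2_def)
qed

lemma L2_scale: "f \<in> L2 M \<Longrightarrow> (\<lambda>x. c * f x) \<in> L2 M"
  by (auto simp: L2_def power_mult_distrib)

lemma L2_diff: "f \<in> L2 M \<Longrightarrow> g \<in> L2 M \<Longrightarrow> (\<lambda>x. f x - g x) \<in> L2 M"
  using L2_add[of f M "\<lambda>x. - 1 * g x"] L2_scale[of g M "- 1"] by simp

lemma L2_sum: "(\<And>i. i \<in> I \<Longrightarrow> f i \<in> L2 M) \<Longrightarrow> (\<lambda>x. \<Sum>i\<in>I. f i x) \<in> L2 M"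
proof (induction I rule: infinite_finite_induct)
  case (insert i I)
  then show ?case using L2_add[of "f i" M] by simp
qed (simp_all add: L2_def)

lemma L2_indicator:
  assumes "A \<in> sets M" "emeasure M A < \<infinity>"
  shows "indicator A \<in> L2 M"
  using assms
  by (simp add: L2_def power2_eq_square indicator_inter_arith[symmetric] integrable_indicator_iff
      sets.Int_space_eq2)

lemma L2_norm_of_square: "(L2_norm_of M f)\<^sup>2 = (\<integral>x. (f x)\<^sup>2 \<partial>M)"
  by (simp add: L2_norm_of_def)

lemma L2_norm_of_commute: "L2_norm_of M (\<lambda>x. f x - g x) = L2_norm_of M (\<lambda>x. g x - f x)"
  by (simp add: L2_norm_of_def power2_commute)

lemma L2_Cauchy_Schwarz:
  assumes f: "f \<in> L2 M" and g: "g \<in> L2 M"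
  shows "\<bar>\<integral>x. f x * g x \<partial>M\<bar> \<le> L2_norm_of M f * L2_norm_of M g"
proof -
  have nn: "(\<integral>\<^sup>+x. ennreal (u x) \<partial>M) = ennreal (\<integral>x. u x \<partial>M)"
    if "integrable M u" "\<And>x. 0 \<le> u x" for u
    using that by (intro nn_integral_eq_integral) auto
  have "(\<integral>\<^sup>+x. ennreal \<bar>f x\<bar> * ennreal \<bar>g x\<bar> \<partial>M) = ennreal (\<integral>x. \<bar>f x\<bar> * \<bar>g x\<bar> \<partial>M)"
    using nn[of "\<lambda>x. \<bar>f x\<bar> * \<bar>g x\<bar>"] L2_integrable_mult[OF f g]
    by (simp add: ennreal_mult[symmetric] abs_mult[symmetric])
  then have "ennreal ((\<integral>x. \<bar>f x\<bar> * \<bar>g x\<bar> \<partial>M)\<^sup>2)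
      = (\<integral>\<^sup>+x. ennreal \<bar>f x\<bar> * ennreal \<bar>g x\<bar> \<partial>M)\<^sup>2"
    by (simp add: ennreal_power)
  also have "\<dots> \<le> (\<integral>\<^sup>+x. ennreal \<bar>f x\<bar> ^ 2 \<partial>M) * (\<integral>\<^sup>+x. ennreal \<bar>g x\<bar> ^ 2 \<partial>M)"
    using f g by (intro Cauchy_Schwarz_nn_integral) (auto simp: L2_def)
  also have "\<dots> = ennreal ((\<integral>x. (f x)\<^sup>2 \<partial>M) * (\<integral>x. (g x)\<^sup>2 \<partial>M))"
    using nn[of "\<lambda>x. (f x)\<^sup>2"] nn[of "\<lambda>x. (g x)\<^sup>2"] f g
    by (simp add: ennreal_power L2_integrable_square ennreal_mult)
  finally have "(\<integral>x. \<bar>f x\<bar> * \<bar>g x\<bar> \<partial>M)\<^sup>2 \<le> (\<integral>x. (f x)\<^sup>2 \<partial>M) * (\<integral>x. (g x)\<^sup>2 \<partial>M)"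
    by (simp add: ennreal_le_iff)
  then have "\<integral>x. \<bar>f x\<bar> * \<bar>g x\<bar> \<partial>M \<le> L2_norm_of M f * L2_norm_of M g"
    unfolding L2_norm_of_def by (metis real_le_rsqrt real_sqrt_mult)
  moreover have "\<bar>\<integral>x. f x * g x \<partial>M\<bar> \<le> \<integral>x. \<bar>f x\<bar> * \<bar>g x\<bar> \<partial>M"
    using integral_abs_bound[of M "\<lambda>x. f x * g x"] by (simp add: abs_mult)
  ultimately show ?thesis by linarith
qed

lemma L2_norm_of_add_le:
  assumes f: "f \<in> L2 M" and g: "g \<in> L2 M"
  shows "L2_norm_of M (\<lambda>x. f x + g x) \<le> L2_norm_of M f + L2_norm_of M g"
proof (rule power2_le_imp_le)
  have "(L2_norm_of M (\<lambda>x. f x + g x))\<^sup>2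
      = (\<integral>x. (f x)\<^sup>2 + (g x)\<^sup>2 + 2 * (f x * g x) \<partial>M)"
    unfolding L2_norm_of_square by (simp add: power2_sum mult.assoc)
  also have "\<dots> = (L2_norm_of M f)\<^sup>2 + (L2_norm_of M g)\<^sup>2 + 2 * (\<integral>x. f x * g x \<partial>M)"
    using f g L2_integrable_mult[OF f g] by (simp add: L2_norm_of_square L2_integrable_square)
  also have "\<dots> \<le> (L2_norm_of M f + L2_norm_of M g)\<^sup>2"
    using L2_Cauchy_Schwarz[OF f g] by (simp add: power2_sum)
  finally show "(L2_norm_of M (\<lambda>x. f x + g x))\<^sup>2 \<le> (L2_norm_of M f + L2_norm_of M g)\<^sup>2" .
qed (simp add: L2_norm_of_def)

lemma L2_norm_of_diff_le:
  assumes "f \<in> L2 M" "g \<in> L2 M" "h \<in> L2 M"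
  shows "L2_norm_of M (\<lambda>x. f x - h x) \<le> L2_norm_of M (\<lambda>x. f x - g x) + L2_norm_of M (\<lambda>x. g x - h x)"
  using L2_norm_of_add_le[OF L2_diff[of f M g] L2_diff[of g M h]] assms by simp

lemma L2_Markov:
  assumes f: "f \<in> L2 M" and e: "e > 0"
  shows "emeasure M {x\<in>space M. e \<le> \<bar>f x\<bar>} < \<infinity>"
    and "measure M {x\<in>space M. e \<le> \<bar>f x\<bar>} \<le> (\<integral>x. (f x)\<^sup>2 \<partial>M) / e\<^sup>2"
proof -
  have [measurable]: "f \<in> borel_measurable M"
    using f by (rule L2_measurable)
  have eq: "{x\<in>space M. e \<le> \<bar>f x\<bar>} = {x\<in>space M. e\<^sup>2 \<le> (f x)\<^sup>2}"
    using e by (simp flip: abs_le_square_iff)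
  have "emeasure M {x\<in>space M. e\<^sup>2 \<le> (f x)\<^sup>2} \<le> ennreal (1 / e\<^sup>2 * (\<integral>x. (f x)\<^sup>2 \<partial>M))"
    using f e by (intro integral_Markov_inequality) (auto simp: L2_integrable_square)
  also have "\<dots> < \<infinity>"
    by simp
  finally show "emeasure M {x\<in>space M. e \<le> \<bar>f x\<bar>} < \<infinity>"
    unfolding eq .
  show "measure M {x\<in>space M. e \<le> \<bar>f x\<bar>} \<le> (\<integral>x. (f x)\<^sup>2 \<partial>M) / e\<^sup>2"
    unfolding eq using f e
    by (intro integral_Markov_inequality_measure[where A="space M"]) (auto simp: L2_integrable_square)
qed

lemma L2_set_integrable:
  assumes "f \<in> L2 M" "B \<in> sets M" "emeasure M B < \<infinity>"
  shows "set_integrable M B f"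
  using L2_integrable_mult[OF L2_indicator[OF assms(2,3)] assms(1)] by (simp add: set_integrable_def)

lemma L2_inner_tendsto:
  assumes g: "\<And>n. g n \<in> L2 M" and h: "h \<in> L2 M" and u: "u \<in> L2 M"
    and lim: "(\<lambda>n. L2_norm_of M (\<lambda>x. g n x - h x)) \<longlonglongrightarrow> 0"
  shows "(\<lambda>n. \<integral>x. g n x * u x \<partial>M) \<longlonglongrightarrow> (\<integral>x. h x * u x \<partial>M)"
proof (rule LIM_zero_cancel, rule Lim_null_comparison)
  have "(\<integral>x. g n x * u x \<partial>M) - (\<integral>x. h x * u x \<partial>M) = (\<integral>x. (g n x - h x) * u x \<partial>M)" for n
    using L2_integrable_mult[OF g u] L2_integrable_mult[OF h u] by (simp add: left_diff_distrib)
  then have "norm ((\<integral>x. g n x * u x \<partial>M) - (\<integral>x. h x * u x \<partial>M))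
      \<le> L2_norm_of M (\<lambda>x. g n x - h x) * L2_norm_of M u" for n
    using L2_Cauchy_Schwarz[OF L2_diff[OF g h] u] by simp
  then show "eventually (\<lambda>n. norm ((\<integral>x. g n x * u x \<partial>M) - (\<integral>x. h x * u x \<partial>M))
      \<le> L2_norm_of M (\<lambda>x. g n x - h x) * L2_norm_of M u) sequentially"
    by simp
  show "(\<lambda>n. L2_norm_of M (\<lambda>x. g n x - h x) * L2_norm_of M u) \<longlonglongrightarrow> 0"
    using tendsto_mult_left_zero[OF lim] .
qed

lemma L2_set_integral_tendsto:
  assumes "\<And>n. g n \<in> L2 M" "h \<in> L2 M" "(\<lambda>n. L2_norm_of M (\<lambda>x. g n x - h x)) \<longlonglongrightarrow> 0"
    and "B \<in> sets M" "emeasure M B < \<infinity>"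
  shows "(\<lambda>n. LINT x:B|M. g n x) \<longlonglongrightarrow> (LINT x:B|M. h x)"
  using L2_inner_tendsto[OF assms(1-2) L2_indicator[OF assms(4-5)] assms(3)]
  by (simp add: set_lebesgue_integral_def mult.commute)

lemma L2_norm_of_tendsto:
  assumes g: "\<And>n. g n \<in> L2 M" and h: "h \<in> L2 M"
    and lim: "(\<lambda>n. L2_norm_of M (\<lambda>x. g n x - h x)) \<longlonglongrightarrow> 0"
  shows "(\<lambda>n. L2_norm_of M (g n)) \<longlonglongrightarrow> L2_norm_of M h"
proof (rule LIM_zero_cancel, rule Lim_null_comparison[OF _ lim])
  have "norm (L2_norm_of M (g n) - L2_norm_of M h) \<le> L2_norm_of M (\<lambda>x. g n x - h x)" for n
  proof -
    have "L2_norm_of M (g n) \<le> L2_norm_of M (\<lambda>x. g n x - h x) + L2_norm_of M h"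
      using L2_norm_of_add_le[OF L2_diff[OF g[of n] h] h] by simp
    moreover have "L2_norm_of M h \<le> L2_norm_of M (\<lambda>x. g n x - h x) + L2_norm_of M (g n)"
      using L2_norm_of_add_le[OF L2_diff[OF h g[of n]] g[of n]] L2_norm_of_commute[of M h "g n"] by simp
    ultimately show ?thesis
      by (simp add: abs_le_iff)
  qed
  then show "eventually (\<lambda>n. norm (L2_norm_of M (g n) - L2_norm_of M h)
      \<le> L2_norm_of M (\<lambda>x. g n x - h x)) sequentially"
    by simp
qed

lemma L2_AE_le_0_if_set_integrals_eq_0:
  assumes h: "h \<in> L2 M" and zero: "\<And>B. B \<in> Ffin M \<Longrightarrow> (LINT x:B|M. h x) = 0"
  shows "AE x in M. h x \<le> 0"
proof (rule AE_upper_bound_inf[where G="\<lambda>_. 0", simplified])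
  fix e :: real
  assume e: "e > 0"
  have [measurable]: "h \<in> borel_measurable M"
    using h by (rule L2_measurable)
  define P where "P = {x\<in>space M. e \<le> h x}"
  have P: "P \<in> sets M"
    unfolding P_def by measurable
  have "emeasure M P \<le> emeasure M {x\<in>space M. e \<le> \<bar>h x\<bar>}"
    using L2_Markov[OF h e] by (intro emeasure_mono) (auto simp: P_def)
  with L2_Markov(1)[OF h e] have P_finite: "emeasure M P < \<infinity>"
    by simp
  have "emeasure M P = 0"
  proof (rule ccontr)
    assume "emeasure M P \<noteq> 0"
    then have "P \<in> Ffin M" and "measure M P > 0"
      using P P_finite
      by (auto simp: Ffin_def emeasure_eq_ennreal_measure zero_less_iff_neq_zero top.not_eq_extremum
          zero_less_measure_iff)
    have "e * measure M P = (LINT x:P|M. e)"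
      using P P_finite by (simp add: set_integral_const)
    also have "\<dots> \<le> (LINT x:P|M. h x)"
      using P P_finite L2_set_integrable[OF h P P_finite]
      by (intro set_integral_mono) (auto simp: P_def set_integrable_def)
    also have "\<dots> = 0"
      using zero[OF \<open>P \<in> Ffin M\<close>] .
    finally show False
      using e \<open>measure M P > 0\<close> by (simp add: mult_le_0_iff)
  qed
  then have "AE x in M. x \<notin> P"
    using P by (intro AE_not_in) (simp add: null_sets_def)
  then show "AE x in M. h x \<le> e"
    by (rule AE_mp) (auto simp: P_def intro!: AE_I2)
qed

lemma L2_AE_eq_0_if_set_integrals_eq_0:
  assumes h: "h \<in> L2 M" and zero: "\<And>B. B \<in> Ffin M \<Longrightarrow> (LINT x:B|M. h x) = 0"
  shows "AE x in M. h x = 0"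
proof -
  have "AE x in M. h x \<le> 0"
    using h zero by (rule L2_AE_le_0_if_set_integrals_eq_0)
  moreover have "AE x in M. - h x \<le> 0"
  proof (rule L2_AE_le_0_if_set_integrals_eq_0)
    show "(\<lambda>x. - h x) \<in> L2 M"
      using L2_scale[OF h, of "- 1"] by simp
    show "(LINT x:B|M. - h x) = 0" if "B \<in> Ffin M" for B
      using zero[OF that] by (simp add: set_lebesgue_integral_def)
  qed
  ultimately show ?thesis
    by eventually_elim simp
qed

lemma Cauchy_fast_subseq:
  fixes D :: "nat \<Rightarrow> nat \<Rightarrow> real" and \<epsilon> :: "nat \<Rightarrow> real"
  assumes Cauchy: "\<And>e. e > 0 \<Longrightarrow> \<exists>N. \<forall>m\<ge>N. \<forall>n\<ge>N. D m n < e" and pos: "\<And>k. \<epsilon> k > 0"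
  obtains r where "mono r" and "\<And>k m n. r k \<le> m \<Longrightarrow> r k \<le> n \<Longrightarrow> D m n < \<epsilon> k"
proof -
  have "\<forall>k. \<exists>N. \<forall>m\<ge>N. \<forall>n\<ge>N. D m n < \<epsilon> k"
    using Cauchy pos by blast
  then obtain N where N: "\<And>k m n. N k \<le> m \<Longrightarrow> N k \<le> n \<Longrightarrow> D m n < \<epsilon> k"
    by metis
  define r where "r k = (\<Sum>i\<le>k. N i)" for k
  have "mono r"
    unfolding r_def mono_def by (auto intro: sum_mono2)
  moreover have "N k \<le> r k" for k
    unfolding r_def by (rule member_le_sum) auto
  ultimately show ?thesis
    using N by (metis le_trans that)
qed

lemma L2_fast_Cauchy_AE_convergent:
  assumes f: "\<And>k. f k \<in> L2 M"
    and fast: "\<And>k. L2_norm_of M (\<lambda>x. f (Suc k) x - f k x) \<le> (1/4) ^ k"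
  shows "AE x in M. convergent (\<lambda>k. f k x)"
proof -
  define d where "d k x = f (Suc k) x - f k x" for k x
  define E where "E k = {x\<in>space M. (1/2) ^ k \<le> \<bar>d k x\<bar>}" for k
  have d: "d k \<in> L2 M" for k
    unfolding d_def by (intro L2_diff f)
  have [measurable]: "d k \<in> borel_measurable M" for k
    using d by (rule L2_measurable)
  have E: "E k \<in> sets M" for k
    unfolding E_def by measurable
  have E_finite: "emeasure M (E k) < \<infinity>" for k
    unfolding E_def by (rule L2_Markov(1)[OF d]) simp
  have "measure M (E k) \<le> (1/4) ^ k" for k
  proof -
    have "measure M (E k) \<le> (L2_norm_of M (d k))\<^sup>2 / ((1/2) ^ k)\<^sup>2"
      unfolding E_def L2_norm_of_square by (rule L2_Markov(2)[OF d]) simp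
    also have "\<dots> \<le> ((1/4) ^ k)\<^sup>2 / ((1/2) ^ k)\<^sup>2"
      using fast[of k] by (intro divide_right_mono power_mono) (auto simp: d_def L2_norm_of_def)
    also have "\<dots> = (1/4) ^ k"
    proof -
      have "((1/2) ^ k)\<^sup>2 = ((1/4) ^ k :: real)"
        by (simp add: power2_eq_square flip: power_mult_distrib)
      then show ?thesis
        by (simp add: power2_eq_square)
    qed
    finally show ?thesis .
  qed
  \<comment> \<open>Borel-Cantelli: a.e. x lies in only finitely many E k, so the increments at x
    are eventually dominated by (1/2)^k.\<close>
  then have "summable (\<lambda>k. measure M (E k))"
    by (intro summable_comparison_test[OF _ summable_geometric[of "1/4"]]) auto
  with E E_finite have "AE x in M. eventually (\<lambda>k. x \<in> space M - E k) sequentially"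
    by (rule borel_cantelli_AE1)
  then show ?thesis
  proof eventually_elim
    case (elim x)
    then have "eventually (\<lambda>k. norm (d k x) \<le> (1/2) ^ k) sequentially"
      by eventually_elim (auto simp: E_def)
    then have "summable (\<lambda>k. d k x)"
      by (rule summable_comparison_test_ev) (simp add: summable_geometric)
    moreover have "(\<lambda>k. f k x) = (\<lambda>k. f 0 x + (\<Sum>i<k. d i x))"
      unfolding d_def by (simp add: sum_lessThan_telescope[where f="\<lambda>i. f i x"])
    ultimately show ?case
      by (simp only: summable_iff_convergent convergent_add_const_iff)
  qed
qed

lemma L2_Fatou:
  assumes f: "\<And>j. f j \<in> L2 M" and [measurable]: "h \<in> borel_measurable M"
    and lim: "AE x in M. (\<lambda>j. f j x) \<longlonglongrightarrow> h x"
    and bound: "eventually (\<lambda>j. L2_norm_of M (f j) \<le> C) sequentially"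
  shows "h \<in> L2 M" and "L2_norm_of M h \<le> C"
proof -
  have [measurable]: "f j \<in> borel_measurable M" for j
    using f by (rule L2_measurable)
  have "0 \<le> C"
    using bound by (auto simp: eventually_sequentially L2_norm_of_def intro: order_trans[rotated])
  have "(\<integral>\<^sup>+x. ennreal ((h x)\<^sup>2) \<partial>M) = (\<integral>\<^sup>+x. liminf (\<lambda>j. ennreal ((f j x)\<^sup>2)) \<partial>M)"
    using lim
  proof (intro nn_integral_cong_AE, eventually_elim)
    case (elim x)
    then have "(\<lambda>j. (f j x)\<^sup>2) \<longlonglongrightarrow> (h x)\<^sup>2"
      by (intro tendsto_intros)
    then have "(\<lambda>j. ennreal ((f j x)\<^sup>2)) \<longlonglongrightarrow> ennreal ((h x)\<^sup>2)"
      by (rule tendsto_ennrealI)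
    from lim_imp_Liminf[OF trivial_limit_sequentially this] show ?case
      by simp
  qed
  also have "\<dots> \<le> liminf (\<lambda>j. \<integral>\<^sup>+x. ennreal ((f j x)\<^sup>2) \<partial>M)"
    by (rule nn_integral_liminf) measurable
  also have "\<dots> \<le> liminf (\<lambda>j. ennreal (C\<^sup>2))"
    using bound
  proof (intro Liminf_mono, eventually_elim)
    case (elim j)
    have "(\<integral>\<^sup>+x. ennreal ((f j x)\<^sup>2) \<partial>M) = ennreal ((L2_norm_of M (f j))\<^sup>2)"
      unfolding L2_norm_of_square using f by (intro nn_integral_eq_integral) (auto simp: L2_def)
    also have "\<dots> \<le> ennreal (C\<^sup>2)"
      using elim by (intro ennreal_leI power_mono) (auto simp: L2_norm_of_def)
    finally show ?case .
  qed
  finally have le: "(\<integral>\<^sup>+x. ennreal ((h x)\<^sup>2) \<partial>M) \<le> ennreal (C\<^sup>2)"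
    by (simp add: Liminf_const)
  then have int: "integrable M (\<lambda>x. (h x)\<^sup>2)"
    unfolding integrable_iff_bounded by (auto simp: top.not_eq_extremum le_less_trans)
  then show "h \<in> L2 M"
    by (simp add: L2_def)
  have "ennreal (\<integral>x. (h x)\<^sup>2 \<partial>M) \<le> ennreal (C\<^sup>2)"
    using le int by (subst nn_integral_eq_integral[symmetric]) auto
  then have "(\<integral>x. (h x)\<^sup>2 \<partial>M) \<le> C\<^sup>2"
    by (simp add: ennreal_le_iff)
  then show "L2_norm_of M h \<le> C"
    unfolding L2_norm_of_def using \<open>0 \<le> C\<close> by (rule real_le_lsqrt[rotated])
qed

lemma L2_fast_Cauchy_limit:
  assumes f: "\<And>k. f k \<in> L2 M"
    and fast: "\<And>k j. k \<le> j \<Longrightarrow> L2_norm_of M (\<lambda>x. f j x - f k x) \<le> (1/4) ^ k"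
  obtains h where "h \<in> L2 M" and "\<And>k. L2_norm_of M (\<lambda>x. h x - f k x) \<le> (1/4) ^ k"
proof -
  have [measurable]: "f k \<in> borel_measurable M" for k
    using f by (rule L2_measurable)
  have "AE x in M. convergent (\<lambda>k. f k x)"
    using f fast by (rule L2_fast_Cauchy_AE_convergent) simp
  then have lim: "AE x in M. (\<lambda>k. f k x) \<longlonglongrightarrow> lim (\<lambda>k. f k x)"
    by (auto simp: convergent_LIMSEQ_iff)
  define h where "h x = lim (\<lambda>k. f k x)" for x
  have [measurable]: "h \<in> borel_measurable M"
    unfolding h_def by measurable
  have tail: "(\<lambda>x. h x - f k x) \<in> L2 M \<and> L2_norm_of M (\<lambda>x. h x - f k x) \<le> (1/4) ^ k" for k
  proof -
    have diffs: "(\<lambda>x. f j x - f k x) \<in> L2 M" for j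
      by (intro L2_diff f)
    have "(\<lambda>x. h x - f k x) \<in> borel_measurable M"
      by measurable
    moreover have "AE x in M. (\<lambda>j. f j x - f k x) \<longlonglongrightarrow> h x - f k x"
      using lim by eventually_elim (auto simp: h_def intro: tendsto_diff)
    moreover have "eventually (\<lambda>j. L2_norm_of M (\<lambda>x. f j x - f k x) \<le> (1/4) ^ k) sequentially"
      using eventually_ge_at_top[of k] by eventually_elim (rule fast)
    ultimately show ?thesis
      using L2_Fatou[OF diffs] by simp
  qed
  have "h \<in> L2 M"
    using L2_add[OF conjunct1[OF tail[of 0]] f[of 0]] by simp
  with tail show ?thesis
    by (blast intro: that)
qed

lemma L2_complete:
  assumes g: "\<And>n. g n \<in> L2 M"
    and Cauchy: "\<And>e. e > 0 \<Longrightarrow> \<exists>N. \<forall>m\<ge>N. \<forall>n\<ge>N. L2_norm_of M (\<lambda>x. g m x - g n x) < e"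
  obtains h where "h \<in> L2 M" and "(\<lambda>n. L2_norm_of M (\<lambda>x. g n x - h x)) \<longlonglongrightarrow> 0"
proof -
  obtain r where "mono r"
    and fast: "\<And>k m n. r k \<le> m \<Longrightarrow> r k \<le> n \<Longrightarrow> L2_norm_of M (\<lambda>x. g m x - g n x) < (1/4) ^ k"
    using Cauchy_fast_subseq[of "\<lambda>m n. L2_norm_of M (\<lambda>x. g m x - g n x)" "\<lambda>k. (1/4) ^ k"] Cauchy
    by auto
  have "L2_norm_of M (\<lambda>x. g (r j) x - g (r k) x) \<le> (1/4) ^ k" if "k \<le> j" for k j
    using fast[OF monoD[OF \<open>mono r\<close> that] order_refl] by simp
  then obtain h where h: "h \<in> L2 M" and tail: "\<And>k. L2_norm_of M (\<lambda>x. h x - g (r k) x) \<le> (1/4) ^ k"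
    using L2_fast_Cauchy_limit[of "\<lambda>k. g (r k)"] g by blast
  show ?thesis
  proof (rule that[OF h], rule LIMSEQ_I)
    fix e :: real
    assume "e > 0"
    then obtain k where k: "(1/4) ^ k < e / 2"
      using real_arch_pow_inv[of "e / 2" "1/4"] by auto
    have "L2_norm_of M (\<lambda>x. g n x - h x) < e" if "r k \<le> n" for n
    proof -
      have "L2_norm_of M (\<lambda>x. g n x - h x)
          \<le> L2_norm_of M (\<lambda>x. g n x - g (r k) x) + L2_norm_of M (\<lambda>x. g (r k) x - h x)"
        using g[of n] g[of "r k"] h by (rule L2_norm_of_diff_le)
      also have "\<dots> < (1/4) ^ k + (1/4) ^ k"
        using fast[OF that order_refl] tail[of k] by (simp add: L2_norm_of_commute[of M "g (r k)"])
      finally show ?thesis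
        using k by simp
    qed
    then show "\<exists>N. \<forall>n\<ge>N. norm (L2_norm_of M (\<lambda>x. g n x - h x) - 0) < e"
      by (auto simp: L2_norm_of_def)
  qed
qed

definition indicator_comb :: "('a set \<Rightarrow> real) \<Rightarrow> 'a \<Rightarrow> real" where
  "indicator_comb c x = (\<Sum>A\<in>ksupp c. c A * indicator A x)"

lemma indicator_comb_eq_sum:
  assumes "finite S" "ksupp c \<subseteq> S"
  shows "indicator_comb c x = (\<Sum>A\<in>S. c A * indicator A x)"
  unfolding indicator_comb_def using assms by (intro sum.mono_neutral_left) (auto simp: ksupp_def)

lemma kcoeffs_diff:
  assumes "c \<in> kcoeffs Y" "d \<in> kcoeffs Y"
  shows "(\<lambda>y. c y - d y) \<in> kcoeffs Y"
proof -
  have "ksupp (\<lambda>y. c y - d y) \<subseteq> ksupp c \<union> ksupp d"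
    by (auto simp: ksupp_def)
  with assms show ?thesis
    by (auto simp: kcoeffs_def intro: finite_subset)
qed

lemma indicator_comb_diff:
  assumes "c \<in> kcoeffs Y" "d \<in> kcoeffs Y"
  shows "indicator_comb (\<lambda>A. c A - d A) x = indicator_comb c x - indicator_comb d x"
proof -
  define S where "S = ksupp c \<union> ksupp d"
  have S: "finite S"
    using assms by (simp add: S_def kcoeffs_def)
  have "ksupp (\<lambda>A. c A - d A) \<subseteq> S"
    by (auto simp: S_def ksupp_def)
  with S show ?thesis
    by (simp add: indicator_comb_eq_sum[of S] S_def sum_subtractf left_diff_distrib)
qed

lemma Ffin_L2_indicator: "A \<in> Ffin M \<Longrightarrow> indicator A \<in> L2 M"
  by (simp add: Ffin_def L2_indicator)

lemma indicator_comb_L2: "c \<in> kcoeffs (Ffin M) \<Longrightarrow> indicator_comb c \<in> L2 M"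
  unfolding indicator_comb_def[abs_def] kcoeffs_def
  by (intro L2_sum L2_scale Ffin_L2_indicator) blast

lemma Kmu_eq_integral:
  assumes "A \<in> Ffin M" "B \<in> Ffin M"
  shows "Kmu M A B = (\<integral>x. indicator A x * indicator B x \<partial>M)"
proof -
  have "A \<inter> B \<inter> space M = A \<inter> B"
    using assms sets.sets_into_space[of A M] by (auto simp: Ffin_def)
  then show ?thesis
    by (simp add: Kmu_def flip: indicator_inter_arith)
qed

lemma kspan_norm2_Kmu:
  assumes c: "c \<in> kcoeffs (Ffin M)"
  shows "kspan_norm2 (Kmu M) c = (L2_norm_of M (indicator_comb c))\<^sup>2"
proof -
  have supp: "A \<in> Ffin M" if "A \<in> ksupp c" for A
    using c that by (auto simp: kcoeffs_def)
  have int: "integrable M (\<lambda>x. c A * c B * (indicator A x * indicator B x))"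
    if "A \<in> ksupp c" "B \<in> ksupp c" for A B
    using L2_integrable_mult[OF Ffin_L2_indicator Ffin_L2_indicator, OF supp supp, OF that] by simp
  have "(L2_norm_of M (indicator_comb c))\<^sup>2 = (\<integral>x. (indicator_comb c x)\<^sup>2 \<partial>M)"
    by (rule L2_norm_of_square)
  also have "\<dots> = (\<integral>x. (\<Sum>A\<in>ksupp c. \<Sum>B\<in>ksupp c. c A * c B * (indicator A x * indicator B x)) \<partial>M)"
    unfolding indicator_comb_def power2_eq_square sum_product by (simp add: ac_simps)
  also have "\<dots> = (\<Sum>A\<in>ksupp c. \<Sum>B\<in>ksupp c. c A * c B * Kmu M A B)"
    using int by (simp add: Kmu_eq_integral supp)
  finally show ?thesis
    by (simp add: kspan_norm2_def)
qed

lemma kspan_fun_Kmu: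
  assumes c: "c \<in> kcoeffs (Ffin M)" and B: "B \<in> Ffin M"
  shows "kspan_fun (Kmu M) c B = (LINT x:B|M. indicator_comb c x)"
proof -
  have supp: "A \<in> Ffin M" if "A \<in> ksupp c" for A
    using c that by (auto simp: kcoeffs_def)
  have int: "integrable M (\<lambda>x. c A * (indicator B x * indicator A x))" if "A \<in> ksupp c" for A
    using L2_integrable_mult[OF Ffin_L2_indicator Ffin_L2_indicator, OF B supp, OF that] by simp
  have "(LINT x:B|M. indicator_comb c x) = (\<integral>x. (\<Sum>A\<in>ksupp c. c A * (indicator B x * indicator A x)) \<partial>M)"
    unfolding set_lebesgue_integral_def indicator_comb_def by (simp add: sum_distrib_left ac_simps)
  also have "\<dots> = (\<Sum>A\<in>ksupp c. c A * Kmu M B A)"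
    using int by (simp add: Kmu_eq_integral B supp)
  finally show ?thesis
    by (simp add: kspan_fun_def)
qed

lemma rkhs_approx_Kmu_iff:
  "rkhs_approx (Kmu M) (Ffin M) cs \<Phi> \<longleftrightarrow>
     (\<forall>n. cs n \<in> kcoeffs (Ffin M)) \<and>
     (\<forall>e>0. \<exists>N. \<forall>m\<ge>N. \<forall>n\<ge>N.
        L2_norm_of M (\<lambda>x. indicator_comb (cs m) x - indicator_comb (cs n) x) < e) \<and>
     (\<forall>B\<in>Ffin M. (\<lambda>n. LINT x:B|M. indicator_comb (cs n) x) \<longlonglongrightarrow> \<Phi> B)"
  unfolding rkhs_approx_def
proof (intro conj_cong refl)
  assume cs: "\<forall>n. cs n \<in> kcoeffs (Ffin M)"
  have "sqrt (kspan_norm2 (Kmu M) (\<lambda>y. cs m y - cs n y))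
      = L2_norm_of M (\<lambda>x. indicator_comb (cs m) x - indicator_comb (cs n) x)" for m n
    using cs kspan_norm2_Kmu[OF kcoeffs_diff, of "cs m" M "cs n"]
    by (simp add: indicator_comb_diff[of "cs m" "Ffin M" "cs n"] L2_norm_of_def)
  then show "(\<forall>e>0. \<exists>N. \<forall>m\<ge>N. \<forall>n\<ge>N. sqrt (kspan_norm2 (Kmu M) (\<lambda>y. cs m y - cs n y)) < e) =
    (\<forall>e>0. \<exists>N. \<forall>m\<ge>N. \<forall>n\<ge>N. L2_norm_of M (\<lambda>x. indicator_comb (cs m) x - indicator_comb (cs n) x) < e)"
    by simp
  show "(\<forall>B\<in>Ffin M. (\<lambda>n. kspan_fun (Kmu M) (cs n) B) \<longlonglongrightarrow> \<Phi> B) =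
    (\<forall>B\<in>Ffin M. (\<lambda>n. LINT x:B|M. indicator_comb (cs n) x) \<longlonglongrightarrow> \<Phi> B)"
    using cs by (simp add: kspan_fun_Kmu)
qed

lemma simple_function_AE_eq_sum_values:
  fixes F :: "'a \<Rightarrow> real"
  assumes F: "simple_function M F"
  defines "W \<equiv> {v \<in> F ` space M. v \<noteq> 0 \<and> emeasure M (F -` {v} \<inter> space M) > 0}"
  shows "AE x in M. F x = (\<Sum>v\<in>W. v * indicator (F -` {v} \<inter> space M) x)"
proof -
  have W: "finite W"
    using simple_functionD(1)[OF F] by (rule rev_finite_subset) (auto simp: W_def)
  have "AE x in M. \<forall>v\<in>F ` space M - W - {0}. x \<notin> F -` {v} \<inter> space M"
  proof (rule AE_finite_allI)
    show "finite (F ` space M - W - {0})"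
      using simple_functionD(1)[OF F] by simp
    fix v
    assume "v \<in> F ` space M - W - {0}"
    then have "F -` {v} \<inter> space M \<in> null_sets M"
      using simple_functionD(2)[OF F] by (auto simp: W_def null_sets_def zero_less_iff_neq_zero)
    then show "AE x in M. x \<notin> F -` {v} \<inter> space M"
      by (rule AE_not_in)
  qed
  then show ?thesis
    using AE_space
  proof eventually_elim
    case (elim x)
    have "(\<Sum>v\<in>W. v * indicator (F -` {v} \<inter> space M) x) = (\<Sum>v\<in>W. if v = F x then v else 0)"
      using elim by (intro sum.cong) (auto split: split_indicator)
    also have "\<dots> = F x"
      using elim W by (auto simp: sum.delta')
    finally show ?case ..
  qed
qed

lemma sum_indicator_eq_indicator_comb:
  fixes a :: "'b \<Rightarrow> real"
  assumes W: "finite W" and inj: "inj_on A W" and AW: "A ` W \<subseteq> Y"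
  obtains c where "c \<in> kcoeffs Y" and "\<And>x. indicator_comb c x = (\<Sum>v\<in>W. a v * indicator (A v) x)"
proof -
  define c where "c B = (\<Sum>v\<in>W. if A v = B then a v else 0)" for B
  have c_A: "c (A v) = a v" if "v \<in> W" for v
  proof -
    have "c (A v) = (\<Sum>w\<in>W. if w = v then a w else 0)"
      unfolding c_def using that inj by (intro sum.cong) (auto dest: inj_onD)
    also have "\<dots> = a v"
      using W that by simp
    finally show ?thesis .
  qed
  have supp: "ksupp c \<subseteq> A ` W"
  proof
    fix B
    assume B: "B \<in> ksupp c"
    show "B \<in> A ` W"
    proof (rule ccontr)
      assume "B \<notin> A ` W"
      then have "c B = 0"
        unfolding c_def by (intro sum.neutral) auto
      with B show False
        by (simp add: ksupp_def)
    qed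
  qed
  have "indicator_comb c x = (\<Sum>v\<in>W. a v * indicator (A v) x)" for x
  proof -
    have "indicator_comb c x = (\<Sum>B\<in>A ` W. c B * indicator B x)"
      using W supp by (intro indicator_comb_eq_sum) auto
    also have "\<dots> = (\<Sum>v\<in>W. a v * indicator (A v) x)"
      by (simp add: sum.reindex[OF inj] c_A)
    finally show ?thesis .
  qed
  moreover have "c \<in> kcoeffs Y"
    using supp W AW by (auto simp: kcoeffs_def intro: finite_subset)
  ultimately show ?thesis
    using that by blast
qed

lemma simple_function_AE_eq_indicator_comb:
  fixes F :: "'a \<Rightarrow> real"
  assumes F: "simple_function M F"
    and fin: "\<And>v. v \<noteq> 0 \<Longrightarrow> emeasure M (F -` {v} \<inter> space M) < \<infinity>"
  obtains c where "c \<in> kcoeffs (Ffin M)" and "AE x in M. indicator_comb c x = F x"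
proof -
  define A where "A v = F -` {v} \<inter> space M" for v
  define W where "W = {v \<in> F ` space M. v \<noteq> 0 \<and> emeasure M (A v) > 0}"
  have "finite W"
    using simple_functionD(1)[OF F] by (rule rev_finite_subset) (auto simp: W_def)
  moreover have "inj_on A W"
  proof (rule inj_onI)
    fix v w
    assume "v \<in> W" "w \<in> W" "A v = A w"
    moreover from \<open>v \<in> W\<close> have "A v \<noteq> {}"
      by (auto simp: W_def)
    ultimately show "v = w"
      by (auto simp: A_def)
  qed
  moreover have "A ` W \<subseteq> Ffin M"
    using simple_functionD(2)[OF F] fin by (auto simp: W_def A_def Ffin_def)
  ultimately obtain c where c: "c \<in> kcoeffs (Ffin M)"
    and c_sum: "\<And>x. indicator_comb c x = (\<Sum>v\<in>W. v * indicator (A v) x)"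
    by (rule sum_indicator_eq_indicator_comb[where a="\<lambda>v. v"]) blast
  have "AE x in M. F x = (\<Sum>v\<in>W. v * indicator (A v) x)"
    using simple_function_AE_eq_sum_values[OF F] by (simp add: A_def W_def)
  with c show ?thesis
    by (intro that) (auto simp: c_sum elim!: eventually_mono)
qed

lemma L2_dominated_tendsto:
  assumes \<phi>: "\<phi> \<in> L2 M" and g: "g \<in> L2 M" and [measurable]: "\<And>i. F i \<in> borel_measurable M"
    and lim: "\<And>x. x \<in> space M \<Longrightarrow> (\<lambda>i. F i x) \<longlonglongrightarrow> \<phi> x"
    and bound: "\<And>i x. x \<in> space M \<Longrightarrow> \<bar>F i x\<bar> \<le> g x"
  shows "(\<lambda>i. L2_norm_of M (\<lambda>x. F i x - \<phi> x)) \<longlonglongrightarrow> 0"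
proof -
  have [measurable]: "\<phi> \<in> borel_measurable M" "g \<in> borel_measurable M"
    using \<phi> g by (simp_all add: L2_measurable)
  have "(\<lambda>i. \<integral>x. (F i x - \<phi> x)\<^sup>2 \<partial>M) \<longlonglongrightarrow> (\<integral>x. 0 \<partial>M)"
  proof (rule integral_dominated_convergence[where w="\<lambda>x. 2 * (g x)\<^sup>2 + 2 * (\<phi> x)\<^sup>2"])
    show "integrable M (\<lambda>x. 2 * (g x)\<^sup>2 + 2 * (\<phi> x)\<^sup>2)"
      using \<phi> g by (simp add: L2_integrable_square)
    show "AE x in M. (\<lambda>i. (F i x - \<phi> x)\<^sup>2) \<longlonglongrightarrow> 0"
      using AE_space
    proof eventually_elim
      case (elim x)
      show ?case
        using tendsto_power[OF tendsto_diff[OF lim[OF elim] tendsto_const[of "\<phi> x"]], of 2] by simp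
    qed
    show "AE x in M. norm ((F i x - \<phi> x)\<^sup>2) \<le> 2 * (g x)\<^sup>2 + 2 * (\<phi> x)\<^sup>2" for i
      using AE_space
    proof eventually_elim
      case (elim x)
      have "\<bar>F i x - \<phi> x\<bar> \<le> g x + \<bar>\<phi> x\<bar>"
        using bound[OF elim, of i] by linarith
      then have "(F i x - \<phi> x)\<^sup>2 \<le> (g x + \<bar>\<phi> x\<bar>)\<^sup>2"
        by (metis abs_ge_zero power2_abs power_mono)
      also have "\<dots> \<le> 2 * (g x)\<^sup>2 + 2 * (\<phi> x)\<^sup>2"
        using sum_squares_bound[of "g x" "\<bar>\<phi> x\<bar>"] by (simp add: power2_sum)
      finally show ?case
        by simp
    qed
  qed measurable
  then show ?thesis
    using tendsto_real_sqrt by (fastforce simp: L2_norm_of_def)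
qed

lemma L2_simple_approx:
  assumes \<phi>: "\<phi> \<in> L2 M"
  obtains F where "\<And>i. simple_function M (F i)"
    and "\<And>i v. v \<noteq> 0 \<Longrightarrow> emeasure M (F i -` {v} \<inter> space M) < \<infinity>"
    and "(\<lambda>i. L2_norm_of M (\<lambda>x. F i x - \<phi> x)) \<longlonglongrightarrow> 0"
proof -
  have [measurable]: "\<phi> \<in> borel_measurable M"
    using \<phi> by (rule L2_measurable)
  obtain F where F: "\<forall>i. simple_function M (F i)"
    and F_lim: "\<forall>x\<in>space M. (\<lambda>i. F i x) \<longlonglongrightarrow> \<phi> x"
    and F_dist: "\<forall>i. \<forall>x\<in>space M. dist (F i x) 0 \<le> 2 * dist (\<phi> x) 0"
    using borel_measurable_implies_sequence_metric[OF L2_measurable[OF \<phi>], of 0] by blast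
  have F_bound: "\<bar>F i x\<bar> \<le> 2 * \<bar>\<phi> x\<bar>" if "x \<in> space M" for i x
    using F_dist that by (simp add: dist_real_def)
  have [measurable]: "F i \<in> borel_measurable M" for i
    using F by (simp add: borel_measurable_simple_function)
  have "emeasure M (F i -` {v} \<inter> space M) < \<infinity>" if "v \<noteq> 0" for i v
  proof -
    have "F i -` {v} \<inter> space M \<subseteq> {x\<in>space M. \<bar>v\<bar> / 2 \<le> \<bar>\<phi> x\<bar>}"
      using F_bound[of _ i] by fastforce
    then have "emeasure M (F i -` {v} \<inter> space M) \<le> emeasure M {x\<in>space M. \<bar>v\<bar> / 2 \<le> \<bar>\<phi> x\<bar>}"
      by (rule emeasure_mono) measurable
    also have "\<dots> < \<infinity>"
      using L2_Markov(1)[OF \<phi>, of "\<bar>v\<bar> / 2"] that by simp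
    finally show ?thesis .
  qed
  moreover have "(\<lambda>x. 2 * \<bar>\<phi> x\<bar>) \<in> L2 M"
    using \<phi> by (simp add: L2_def power_mult_distrib)
  then have "(\<lambda>i. L2_norm_of M (\<lambda>x. F i x - \<phi> x)) \<longlonglongrightarrow> 0"
    using F_lim F_bound by (intro L2_dominated_tendsto[OF \<phi>]) auto
  ultimately show ?thesis
    using F that by blast
qed

lemma indicator_combs_dense_L2:
  assumes \<phi>: "\<phi> \<in> L2 M"
  obtains cs where "\<And>n. cs n \<in> kcoeffs (Ffin M)"
    and "(\<lambda>n. L2_norm_of M (\<lambda>x. indicator_comb (cs n) x - \<phi> x)) \<longlonglongrightarrow> 0"
proof -
  obtain F where F: "\<And>i. simple_function M (F i)"
    and fin: "\<And>i v. v \<noteq> 0 \<Longrightarrow> emeasure M (F i -` {v} \<inter> space M) < \<infinity>"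
    and lim: "(\<lambda>i. L2_norm_of M (\<lambda>x. F i x - \<phi> x)) \<longlonglongrightarrow> 0"
    using L2_simple_approx[OF \<phi>] by blast
  have "\<exists>c. c \<in> kcoeffs (Ffin M) \<and> (AE x in M. indicator_comb c x = F i x)" for i
    using simple_function_AE_eq_indicator_comb[OF F fin] by blast
  then obtain cs where cs: "\<And>i. cs i \<in> kcoeffs (Ffin M)"
    and cs_F: "\<And>i. AE x in M. indicator_comb (cs i) x = F i x"
    by metis
  have "L2_norm_of M (\<lambda>x. indicator_comb (cs i) x - \<phi> x) = L2_norm_of M (\<lambda>x. F i x - \<phi> x)" for i
  proof -
    have [measurable]: "indicator_comb (cs i) \<in> borel_measurable M" "F i \<in> borel_measurable M"
      "\<phi> \<in> borel_measurable M"
      using indicator_comb_L2[OF cs] F \<phi> by (simp_all add: L2_measurable borel_measurable_simple_function)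
    show ?thesis
      unfolding L2_norm_of_def using cs_F[of i]
      by (intro arg_cong[where f=sqrt] integral_cong_AE) (auto elim!: eventually_mono)
  qed
  with lim show ?thesis
    using that[OF cs] by simp
qed

lemma rkhs_approx_Kmu_L2_limit:
  assumes "rkhs_approx (Kmu M) (Ffin M) cs \<Phi>"
  obtains \<phi> where "\<phi> \<in> L2 M"
    and "(\<lambda>n. L2_norm_of M (\<lambda>x. indicator_comb (cs n) x - \<phi> x)) \<longlonglongrightarrow> 0"
    and "\<forall>A\<in>Ffin M. \<Phi> A = (LINT x:A|M. \<phi> x)"
proof -
  have cs: "\<And>n. cs n \<in> kcoeffs (Ffin M)"
    and Cauchy: "\<And>e. e > 0 \<Longrightarrow> \<exists>N. \<forall>m\<ge>N. \<forall>n\<ge>N.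
        L2_norm_of M (\<lambda>x. indicator_comb (cs m) x - indicator_comb (cs n) x) < e"
    and pointwise: "\<And>B. B \<in> Ffin M \<Longrightarrow> (\<lambda>n. LINT x:B|M. indicator_comb (cs n) x) \<longlonglongrightarrow> \<Phi> B"
    using assms by (simp_all add: rkhs_approx_Kmu_iff)
  have g: "indicator_comb (cs n) \<in> L2 M" for n
    using cs by (rule indicator_comb_L2)
  obtain \<phi> where \<phi>: "\<phi> \<in> L2 M"
    and lim: "(\<lambda>n. L2_norm_of M (\<lambda>x. indicator_comb (cs n) x - \<phi> x)) \<longlonglongrightarrow> 0"
    using L2_complete[OF g Cauchy] by blast
  have "\<Phi> A = (LINT x:A|M. \<phi> x)" if A: "A \<in> Ffin M" for A
    using A L2_set_integral_tendsto[OF g \<phi> lim] by (intro LIMSEQ_unique[OF pointwise[OF A]]) (simp add: Ffin_def)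
  with \<phi> lim that show ?thesis
    by blast
qed

lemma rkhs_approx_Kmu_of_L2:
  assumes \<phi>: "\<phi> \<in> L2 M" and rep: "\<forall>A\<in>Ffin M. \<Phi> A = (LINT x:A|M. \<phi> x)"
  obtains cs where "rkhs_approx (Kmu M) (Ffin M) cs \<Phi>"
proof -
  obtain cs where cs: "\<And>n. cs n \<in> kcoeffs (Ffin M)"
    and lim: "(\<lambda>n. L2_norm_of M (\<lambda>x. indicator_comb (cs n) x - \<phi> x)) \<longlonglongrightarrow> 0"
    using indicator_combs_dense_L2[OF \<phi>] by blast
  have g: "indicator_comb (cs n) \<in> L2 M" for n
    using cs by (rule indicator_comb_L2)
  have "rkhs_approx (Kmu M) (Ffin M) cs \<Phi>"
    unfolding rkhs_approx_Kmu_iff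
  proof (intro conjI allI impI ballI cs)
    fix e :: real
    assume "e > 0"
    then obtain N where N: "\<And>n. n \<ge> N \<Longrightarrow> L2_norm_of M (\<lambda>x. indicator_comb (cs n) x - \<phi> x) < e / 2"
      using lim[THEN order_tendstoD(2), of "e / 2"] by (auto simp: eventually_sequentially)
    have "L2_norm_of M (\<lambda>x. indicator_comb (cs m) x - indicator_comb (cs n) x) < e"
      if "m \<ge> N" "n \<ge> N" for m n
    proof -
      have "L2_norm_of M (\<lambda>x. indicator_comb (cs m) x - indicator_comb (cs n) x)
          \<le> L2_norm_of M (\<lambda>x. indicator_comb (cs m) x - \<phi> x)
            + L2_norm_of M (\<lambda>x. \<phi> x - indicator_comb (cs n) x)"
        using g \<phi> g by (rule L2_norm_of_diff_le)
      also have "\<dots> < e"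
        using N[OF that(1)] N[OF that(2)] by (simp add: L2_norm_of_commute[of M \<phi>])
      finally show ?thesis .
    qed
    then show "\<exists>N. \<forall>m\<ge>N. \<forall>n\<ge>N. L2_norm_of M (\<lambda>x. indicator_comb (cs m) x - indicator_comb (cs n) x) < e"
      by blast
  next
    fix B
    assume "B \<in> Ffin M"
    then show "(\<lambda>n. LINT x:B|M. indicator_comb (cs n) x) \<longlonglongrightarrow> \<Phi> B"
      using rep L2_set_integral_tendsto[OF g \<phi> lim] by (simp add: Ffin_def)
  qed
  then show ?thesis
    by (rule that)
qed

lemma rkhs_approx_Kmu_norm_tendsto:
  assumes \<phi>: "\<phi> \<in> L2 M" and rep: "\<forall>A\<in>Ffin M. \<Phi> A = (LINT x:A|M. \<phi> x)"
    and approx: "rkhs_approx (Kmu M) (Ffin M) cs \<Phi>"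
  shows "(\<lambda>n. sqrt (kspan_norm2 (Kmu M) (cs n))) \<longlonglongrightarrow> L2_norm_of M \<phi>"
proof -
  have cs: "\<And>n. cs n \<in> kcoeffs (Ffin M)"
    using approx by (simp add: rkhs_approx_Kmu_iff)
  have g: "indicator_comb (cs n) \<in> L2 M" for n
    using cs by (rule indicator_comb_L2)
  obtain h where h: "h \<in> L2 M"
    and lim: "(\<lambda>n. L2_norm_of M (\<lambda>x. indicator_comb (cs n) x - h x)) \<longlonglongrightarrow> 0"
    and rep_h: "\<forall>A\<in>Ffin M. \<Phi> A = (LINT x:A|M. h x)"
    using rkhs_approx_Kmu_L2_limit[OF approx] by blast
  have "AE x in M. h x - \<phi> x = 0"
  proof (rule L2_AE_eq_0_if_set_integrals_eq_0)
    show "(\<lambda>x. h x - \<phi> x) \<in> L2 M"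
      using h \<phi> by (rule L2_diff)
    fix B
    assume "B \<in> Ffin M"
    then show "(LINT x:B|M. h x - \<phi> x) = 0"
      using rep rep_h L2_set_integrable[OF h] L2_set_integrable[OF \<phi>] by (simp add: Ffin_def)
  qed
  then have "L2_norm_of M (\<lambda>x. indicator_comb (cs n) x - h x) = L2_norm_of M (\<lambda>x. indicator_comb (cs n) x - \<phi> x)"
    for n
  proof -
    have [measurable]: "indicator_comb (cs n) \<in> borel_measurable M" "h \<in> borel_measurable M"
      "\<phi> \<in> borel_measurable M"
      using g h \<phi> by (simp_all add: L2_measurable)
    show ?thesis
      unfolding L2_norm_of_def using \<open>AE x in M. h x - \<phi> x = 0\<close>
      by (intro arg_cong[where f=sqrt] integral_cong_AE) (auto elim!: eventually_mono)
  qed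
  with lim have "(\<lambda>n. L2_norm_of M (\<lambda>x. indicator_comb (cs n) x - \<phi> x)) \<longlonglongrightarrow> 0"
    by simp
  then have "(\<lambda>n. L2_norm_of M (indicator_comb (cs n))) \<longlonglongrightarrow> L2_norm_of M \<phi>"
    by (rule L2_norm_of_tendsto[OF g \<phi>])
  then show ?thesis
    using cs by (simp add: kspan_norm2_Kmu L2_norm_of_def)
qed

lemma in_RKHS_Kmu_iff:
  "in_RKHS (Kmu M) (Ffin M) \<Phi> \<longleftrightarrow> (\<exists>\<phi>\<in>L2 M. \<forall>A\<in>Ffin M. \<Phi> A = (LINT x:A|M. \<phi> x))"
proof
  assume "in_RKHS (Kmu M) (Ffin M) \<Phi>"
  then obtain cs where "rkhs_approx (Kmu M) (Ffin M) cs \<Phi>"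
    by (auto simp: in_RKHS_def)
  then show "\<exists>\<phi>\<in>L2 M. \<forall>A\<in>Ffin M. \<Phi> A = (LINT x:A|M. \<phi> x)"
    by (rule rkhs_approx_Kmu_L2_limit) blast
next
  assume "\<exists>\<phi>\<in>L2 M. \<forall>A\<in>Ffin M. \<Phi> A = (LINT x:A|M. \<phi> x)"
  then show "in_RKHS (Kmu M) (Ffin M) \<Phi>"
    by (auto simp: in_RKHS_def elim: rkhs_approx_Kmu_of_L2)
qed

lemma rkhs_norm_Kmu:
  assumes \<phi>: "\<phi> \<in> L2 M" and rep: "\<forall>A\<in>Ffin M. \<Phi> A = (LINT x:A|M. \<phi> x)"
  shows "rkhs_norm (Kmu M) (Ffin M) \<Phi> = L2_norm_of M \<phi>"
  unfolding rkhs_norm_def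
proof (rule the_equality)
  show "\<forall>cs. rkhs_approx (Kmu M) (Ffin M) cs \<Phi> \<longrightarrow>
      (\<lambda>n. sqrt (kspan_norm2 (Kmu M) (cs n))) \<longlonglongrightarrow> L2_norm_of M \<phi>"
    using rkhs_approx_Kmu_norm_tendsto[OF \<phi> rep] by blast
  obtain cs where cs: "rkhs_approx (Kmu M) (Ffin M) cs \<Phi>"
    using rkhs_approx_Kmu_of_L2[OF \<phi> rep] .
  show "r = L2_norm_of M \<phi>"
    if "\<forall>cs. rkhs_approx (Kmu M) (Ffin M) cs \<Phi> \<longrightarrow> (\<lambda>n. sqrt (kspan_norm2 (Kmu M) (cs n))) \<longlonglongrightarrow> r" for r
    using that cs rkhs_approx_Kmu_norm_tendsto[OF \<phi> rep cs] LIMSEQ_unique by blast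
qed

theorem lemma4p3:
  fixes M :: "'a measure" and \<Phi> :: "'a set \<Rightarrow> real"
  assumes "sigma_finite_measure M"
  shows "(in_RKHS (Kmu M) (Ffin M) \<Phi> \<longleftrightarrow>
            (\<exists>\<phi>\<in>L2 M. \<forall>A\<in>Ffin M. \<Phi> A = (LINT x:A|M. \<phi> x)))
       \<and> (\<forall>\<phi>\<in>L2 M. (\<forall>A\<in>Ffin M. \<Phi> A = (LINT x:A|M. \<phi> x)) \<longrightarrow>
            rkhs_norm (Kmu M) (Ffin M) \<Phi> = L2_norm_of M \<phi>)"
  using in_RKHS_Kmu_iff rkhs_norm_Kmu by blast

end
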